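(* Let $s\ge1$, let $q$ be a prime power and let $C^{(1)},\ldots,C^{(s)}\in\mathbb{F}_q^{\mathbb{N}\times\mathbb{N}_0}$ be finite-row generating matrices. Let $\mathbf{T}:\mathbb{N}_0\to\mathbb{N}_0$ with $\mathbf{T}(m)\le m$. If $C^{(1)},\ldots,C^{(s)}$ generate a $(\mathbf{T},s)$-sequence in base $q$ via Algorithm 1 (for some admissible choice of the bijections), then, for every choice of bijections $\psi_r$, $\lambda_{i,j}$, Algorithm 2 based on these matrices and the input sequence $(s_n)_{n\ge0}=(-n-1)_{n\ge0}$ (viewed in $\mathbb{Z}_q$) produces a $(\mathbf{T},s)$-sequence in base $q$.
   Context: $\mathbb{F}_q$ is the finite field with $q$ elements, $D_q=\{0,\ldots,q-1\}$; $\mathbb{Z}_q$ is the ring of $q$-adic integers, each $z\in\mathbb{Z}_q$ having a unique representation $z=\sum_{r\ge0}a_rq^r$, $a_r\in D_q$ (e.g. $-1=\sum_r(q-1)q^r$). A matrix $(c^{(i)}_{j,r})_{j\ge1,r\ge0}$ is finite-row if each row has finitely many nonzero entries. Algorithm 2: choose bijections $\psi_r:D_q\to\mathbb{F}_q$ ($r\ge0$), finite-row matrices $C^{(i)}=(c^{(i)}_{j,r})$, bijections $\lambda_{i,j}:\mathbb{F}_q\to D_q$ ($1\le i\le s$, $j\ge1$) and $(s_n)$ in $\mathbb{Z}_q$; with $s_n=\sum_ra_rq^r$ put $x_n^{(i)}=\sum_{j\ge1}\lambda_{i,j}(\sum_rc^{(i)}_{j,r}\psi_r(a_r))q^{-j}$,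 $\boldsymbol{x}_n=(x_n^{(1)},\ldots,x_n^{(s)})\in[0,1]^s$. Algorithm 1 is the same with $s_n=n$ and $\psi_r(0)=0$ for all large $r$. The $m$-digit truncation $[x_n^{(i)}]_{q,m}=\sum_{j=1}^m\lambda_{i,j}(\cdots)q^{-j}$ (truncation of this digit expansion), applied coordinatewise. Elementary interval in base $q$: $\prod_{i=1}^s[a_iq^{-d_i},(a_i+1)q^{-d_i})$, $d_i\ge0$, $0\le a_i<q^{d_i}$. For $0\le t\le m$, a $(t,m,s)$-net in base $q$ is a set of $q^m$ points in $[0,1)^s$ with exactly $q^t$ points in every elementary interval of volume $q^{t-m}$. A sequence $(\boldsymbol{x}_n)$ is a $(\mathbf{T},s)$-sequence in base $q$ if for all $k\ge0$ and $m$ with $\mathbf{T}(m)<m$ the points $[\boldsymbol{x}_n]_{q,m}$, $kq^m\le n<(k+1)q^m$, form a $(\mathbf{T}(m),m,s)$-net in base $q$. For Algorithm 1 over $\mathbb{F}_q$, producing a $(\mathbf{T},s)$-sequence is equivalent to: for every $m$ with $m>\mathbf{T}(m)$ and all integers $d_1,\ldots,d_s\ge0$ with $1\le d_1+\cdots+d_s\le m-\mathbf{T}(m)$, the vectors $(c^{(i)}_{j,0},\ldots,c^{(i)}_{j,m-1})\in\mathbb{F}_q^m$, $1\le j\le d_i$, $1\le i\le s$, are linearly independent. *)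

theory Defs
  imports Complex_Main
begin

text \<open>r-th q-adic digit of an integer z viewed in the q-adic integers
  (z = sum_r a_r q^r with a_r in {0..q-1}; e.g. -1 has all digits q-1).\<close>
definition qdigit :: "nat \<Rightarrow> int \<Rightarrow> nat \<Rightarrow> nat" where
  "qdigit q z r = nat ((z mod (int q) ^ Suc r) div (int q) ^ r)"

text \<open>j-th base-q digit of the i-th coordinate of the point generated from the
  q-adic input z: lam i j (sum_r c^(i)_{j,r} psi_r(a_r)); the sum is finite since
  the matrix rows are finite.\<close>
definition gen_digit ::
  "(nat \<Rightarrow> nat \<Rightarrow> 'a::{field,finite}) \<Rightarrow> (nat \<Rightarrow> nat \<Rightarrow> nat \<Rightarrow> 'a) \<Rightarrow>
   (nat \<Rightarrow> nat \<Rightarrow> 'a \<Rightarrow> nat) \<Rightarrow> int \<Rightarrow> nat \<Rightarrow> nat \<Rightarrow> nat" where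
  "gen_digit psi C lam z i j =
     lam i j (\<Sum>r\<in>{r. C i j r \<noteq> 0}. C i j r * psi r (qdigit (card (UNIV :: 'a set)) z r))"

definition trunc_point ::
  "(nat \<Rightarrow> nat \<Rightarrow> 'a::{field,finite}) \<Rightarrow> (nat \<Rightarrow> nat \<Rightarrow> nat \<Rightarrow> 'a) \<Rightarrow>
   (nat \<Rightarrow> nat \<Rightarrow> 'a \<Rightarrow> nat) \<Rightarrow> (nat \<Rightarrow> int) \<Rightarrow> nat \<Rightarrow> nat \<Rightarrow> nat \<Rightarrow> real" where
  "trunc_point psi C lam S m n i =
     (\<Sum>j=1..m. real (gen_digit psi C lam (S n) i j) / real (card (UNIV :: 'a set)) ^ j)"

definition is_net :: "nat \<Rightarrow> nat \<Rightarrow> nat \<Rightarrow> nat \<Rightarrow> nat set \<Rightarrow> (nat \<Rightarrow> nat \<Rightarrow> real) \<Rightarrow> bool" where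
  "is_net q t m s N P \<longleftrightarrow> t \<le> m \<and> finite N \<and> card N = q ^ m \<and>
     (\<forall>n\<in>N. \<forall>i\<in>{1..s}. 0 \<le> P n i \<and> P n i < 1) \<and>
     (\<forall>d a. (\<Sum>i=1..s. d i) = m - t \<and> (\<forall>i\<in>{1..s}. a i < q ^ d i) \<longrightarrow>
        card {n\<in>N. \<forall>i\<in>{1..s}. real (a i) / real q ^ d i \<le> P n i \<and>
                                 P n i < (real (a i) + 1) / real q ^ d i} = q ^ t)"

text \<open>(T,s)-sequence in base q; X m n is the m-digit truncation of the n-th point.\<close>
definition is_Ts_seq :: "nat \<Rightarrow> (nat \<Rightarrow> nat) \<Rightarrow> nat \<Rightarrow> (nat \<Rightarrow> nat \<Rightarrow> nat \<Rightarrow> real) \<Rightarrow> bool" where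
  "is_Ts_seq q T s X \<longleftrightarrow>
     (\<forall>k m. T m < m \<longrightarrow> is_net q (T m) m s {k * q ^ m..<(k + 1) * q ^ m} (X m))"

end

(*
  Fix m and a block of q^m consecutive indices n. In both algorithms the inputs s_n of the
  block (n for Algorithm 1, -n-1 here) share all q-adic digits of index at least m, while
  their digits of index below m run through D_q^m exactly once. Hence, for j <= d_i, the j-th
  digit of x_n^(i) is lambda_ij (L_ij y_n + c_ij), where y_n = (psi_r (a_r))_{r<m} runs
  bijectively through F_q^m, L_ij is the linear form given by the first m entries of row j
  of C^(i), and c_ij is constant on the block. So the number of points of the block in an
  elementary interval is the number of solutions of an affine system L_ij y = beta_ij, and
  every right-hand side beta arises from some elementary interval, whatever psi, lambda and
  the block are. The counts are therefore those of the first block of Algorithm 1, which is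
  a (T(m),m,s)-net.
*)
theory Submission
  imports Defs "HOL-Library.FuncSet" "HOL-Library.Cardinality"
begin

lemma qdigit_eq:
  assumes "0 < q"
  shows "qdigit q z r = nat (z div int q ^ r mod int q)"
proof -
  have "z mod int q ^ Suc r = int q ^ r * (z div int q ^ r mod int q) + z mod int q ^ r"
    using mod_mult2_eq'[of z "q ^ r" q] by (simp add: mult.commute)
  moreover have "0 \<le> z mod int q ^ r" "z mod int q ^ r < int q ^ r"
    using assms by simp_all
  ultimately have "z mod int q ^ Suc r div int q ^ r = z div int q ^ r mod int q"
    using assms by (simp add: div_pos_pos_trivial)
  then show ?thesis
    unfolding qdigit_def by simp
qed

lemma qdigit_less: "0 < q \<Longrightarrow> qdigit q z r < q"
  by (simp add: qdigit_eq nat_less_iff)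

lemma mod_power_eq_if_qdigit_eq:
  assumes "0 < q" "\<And>r. r < m \<Longrightarrow> qdigit q z1 r = qdigit q z2 r"
  shows "z1 mod int q ^ m = z2 mod int q ^ m"
  using assms(2)
proof (induction m)
  case 0
  then show ?case by simp
next
  case (Suc m)
  have split: "z mod int q ^ Suc m = int q ^ m * (z div int q ^ m mod int q) + z mod int q ^ m" for z
    using mod_mult2_eq'[of z "q ^ m" q] by (simp add: mult.commute)
  have "nat (z1 div int q ^ m mod int q) = nat (z2 div int q ^ m mod int q)"
    using Suc.prems assms(1) by (simp add: qdigit_eq)
  moreover have "0 \<le> z1 div int q ^ m mod int q" "0 \<le> z2 div int q ^ m mod int q"
    using assms(1) by simp_all
  ultimately have "z1 div int q ^ m mod int q = z2 div int q ^ m mod int q"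
    by simp
  then show ?case
    using Suc by (simp only: split)
qed

lemma eq_if_qdigit_eq_and_div_eq:
  assumes "0 < q" "\<And>r. r < m \<Longrightarrow> qdigit q z1 r = qdigit q z2 r"
    "z1 div int q ^ m = z2 div int q ^ m"
  shows "z1 = z2"
  using mod_power_eq_if_qdigit_eq[OF assms(1,2)] assms(3) by (metis div_mult_mod_eq)

lemma qdigit_eq_if_div_eq:
  assumes "0 < q" "m \<le> r" "z1 div int q ^ m = z2 div int q ^ m"
  shows "qdigit q z1 r = qdigit q z2 r"
proof -
  have "z div int q ^ r = z div int q ^ m div int q ^ (r - m)" for z
    using div_mult2_eq'[of z "q ^ m" "q ^ (r - m)"] assms(2) by (simp add: power_add[symmetric])
  then show ?thesis
    using assms by (simp add: qdigit_eq)
qed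

fun digits_num :: "nat \<Rightarrow> nat \<Rightarrow> (nat \<Rightarrow> nat) \<Rightarrow> nat" where
  "digits_num q 0 e = 0"
| "digits_num q (Suc d) e = q * digits_num q d e + e (Suc d)"

lemma sum_digits_eq_digits_num:
  "0 < q \<Longrightarrow> (\<Sum>j=1..m. real (e j) / real q ^ j) = real (digits_num q m e) / real q ^ m"
  by (induction m) (simp_all add: sum.cl_ivl_Suc field_simps)

lemma digits_num_less: "\<forall>j\<in>{1..d}. e j < q \<Longrightarrow> digits_num q d e < q ^ d"
proof (induction d)
  case 0
  then show ?case by simp
next
  case (Suc d)
  then have "digits_num q d e < q ^ d" "e (Suc d) < q" by auto
  then have "q * digits_num q d e + e (Suc d) < q * (digits_num q d e + 1)" by simp
  also have "\<dots> \<le> q * q ^ d"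
    using \<open>digits_num q d e < q ^ d\<close> by (intro mult_left_mono) auto
  finally show ?case by simp
qed

lemma digits_num_div_power:
  assumes "d \<le> m" "\<forall>j\<in>{1..m}. e j < q"
  shows "digits_num q m e div q ^ (m - d) = digits_num q d e"
  using assms
proof (induction m rule: dec_induct)
  case base
  then show ?case by simp
next
  case (step m)
  have "e (Suc m) < q"
    using step.prems by auto
  then have "(q * digits_num q m e + e (Suc m)) div q = digits_num q m e"
    by simp
  then show ?case
    using step by (simp add: Suc_diff_le div_mult2_eq)
qed

lemma digits_num_cong: "\<forall>j\<in>{1..d}. e j = f j \<Longrightarrow> digits_num q d e = digits_num q d f"
  by (induction d) auto

lemma digits_num_eq_iff:
  assumes "\<forall>j\<in>{1..d}. e j < q" "\<forall>j\<in>{1..d}. f j < q"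
  shows "digits_num q d e = digits_num q d f \<longleftrightarrow> (\<forall>j\<in>{1..d}. e j = f j)"
  using assms
proof (induction d)
  case 0
  then show ?case by simp
next
  case (Suc d)
  have less: "e (Suc d) < q" "f (Suc d) < q"
    using Suc.prems by auto
  have "q * digits_num q d e + e (Suc d) = q * digits_num q d f + f (Suc d) \<longleftrightarrow>
      digits_num q d e = digits_num q d f \<and> e (Suc d) = f (Suc d)" (is "?l = ?r \<longleftrightarrow> _")
  proof
    assume eq: "?l = ?r"
    then have "?l mod q = ?r mod q" by simp
    then have "e (Suc d) = f (Suc d)"
      using less by simp
    then show "digits_num q d e = digits_num q d f \<and> e (Suc d) = f (Suc d)"
      using eq less by simp
  qed simp
  then show ?case
    using Suc by (auto simp: le_Suc_eq)
qed

lemma ex_digits_num_eq: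
  assumes "0 < q" "a < q ^ d"
  shows "\<exists>e. (\<forall>j\<in>{1..d}. e j < q) \<and> digits_num q d e = a"
  using assms(2)
proof (induction d arbitrary: a)
  case 0
  then show ?case by simp
next
  case (Suc d)
  have "a div q < q ^ d"
    using Suc.prems assms(1) by (simp add: div_less_iff_less_mult mult.commute)
  then obtain e where e: "\<forall>j\<in>{1..d}. e j < q" "digits_num q d e = a div q"
    using Suc.IH by blast
  define e' where "e' = e(Suc d := a mod q)"
  have "digits_num q d e' = digits_num q d e"
    by (rule digits_num_cong) (auto simp: e'_def)
  then have "digits_num q (Suc d) e' = a"
    using e by (simp add: e'_def)
  moreover have "\<forall>j\<in>{1..Suc d}. e' j < q"
    using e assms(1) by (auto simp: e'_def le_Suc_eq)
  ultimately show ?case by blast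
qed

lemma sum_digits_in_interval_iff:
  assumes q: "0 < q" and "d \<le> m" and e: "\<forall>j\<in>{1..m}. e j < q" and f: "\<forall>j\<in>{1..d}. f j < q"
  defines "x \<equiv> \<Sum>j=1..m. real (e j) / real q ^ j" and "a \<equiv> digits_num q d f"
  shows "real a / real q ^ d \<le> x \<and> x < (real a + 1) / real q ^ d \<longleftrightarrow> (\<forall>j\<in>{1..d}. e j = f j)"
proof -
  define X Q where "X = digits_num q m e" and "Q = q ^ (m - d)"
  have qm: "real q ^ m = real q ^ d * real Q"
    using \<open>d \<le> m\<close> by (simp add: Q_def power_add[symmetric])
  have pos: "0 < real q ^ m" "0 < Q"
    using q by (simp_all add: Q_def)
  have x: "x = real X / real q ^ m"
    unfolding x_def X_def by (rule sum_digits_eq_digits_num[OF q])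
  have "real a / real q ^ d = real (Q * a) / real q ^ m"
    "(real a + 1) / real q ^ d = real (Q * Suc a) / real q ^ m"
    using q pos(2) by (simp_all add: qm field_simps)
  then have "real a / real q ^ d \<le> x \<and> x < (real a + 1) / real q ^ d \<longleftrightarrow>
      Q * a \<le> X \<and> X < Q * Suc a"
    unfolding x using pos(1) by (simp only: divide_le_cancel divide_less_cancel of_nat_le_iff
        of_nat_less_iff) simp
  also have "\<dots> \<longleftrightarrow> X div Q = a"
    using pos(2) by (auto intro: div_nat_eqI dividend_less_times_div)
  also have "X div Q = digits_num q d e"
    unfolding X_def Q_def using \<open>d \<le> m\<close> e by (rule digits_num_div_power)
  also have "digits_num q d e = a \<longleftrightarrow> (\<forall>j\<in>{1..d}. e j = f j)"
    unfolding a_def using e f \<open>d \<le> m\<close> by (intro digits_num_eq_iff) auto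
  finally show ?thesis .
qed

lemma sum_digits_bounds:
  assumes "0 < q" "\<forall>j\<in>{1..m}. e j < q"
  shows "0 \<le> (\<Sum>j=1..m. real (e j) / real q ^ j) \<and> (\<Sum>j=1..m. real (e j) / real q ^ j) < 1"
proof -
  have "real (digits_num q m e) < real q ^ m"
    using digits_num_less[OF assms(2)] by (metis of_nat_less_iff of_nat_power)
  then show ?thesis
    unfolding sum_digits_eq_digits_num[OF assms(1)] using assms(1) by (simp add: divide_less_eq_1_pos)
qed

definition leading_form ::
  "(nat \<Rightarrow> nat \<Rightarrow> nat \<Rightarrow> 'a::field) \<Rightarrow> nat \<Rightarrow> nat \<Rightarrow> nat \<Rightarrow> (nat \<Rightarrow> 'a) \<Rightarrow> 'a"
  where "leading_form C m i j y = (\<Sum>r<m. C i j r * y r)"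

text \<open>Every z with z div q^m = w has the same q-adic digits of index at least m as w * q^m,
  so this is the contribution of those digits, common to a whole block.\<close>

definition trailing_part ::
  "(nat \<Rightarrow> nat \<Rightarrow> nat \<Rightarrow> 'a::{field,finite}) \<Rightarrow> (nat \<Rightarrow> nat \<Rightarrow> 'a) \<Rightarrow> nat \<Rightarrow> int \<Rightarrow> nat \<Rightarrow> nat \<Rightarrow> 'a"
  where "trailing_part C psi m w i j =
    (\<Sum>r\<in>{r. C i j r \<noteq> 0 \<and> m \<le> r}. C i j r * psi r (qdigit CARD('a) (w * int CARD('a) ^ m) r))"

definition input_vector :: "(nat \<Rightarrow> nat \<Rightarrow> 'a::finite) \<Rightarrow> nat \<Rightarrow> int \<Rightarrow> nat \<Rightarrow> 'a"
  where "input_vector psi m z = (\<lambda>r\<in>{..<m}. psi r (qdigit CARD('a) z r))"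

definition qadic_block :: "nat \<Rightarrow> nat \<Rightarrow> (nat \<Rightarrow> int) \<Rightarrow> int \<Rightarrow> nat set \<Rightarrow> bool"
  where "qadic_block q m S w N \<longleftrightarrow>
    finite N \<and> card N = q ^ m \<and> inj_on S N \<and> (\<forall>n\<in>N. S n div int q ^ m = w)"

lemma generator_sum_split:
  fixes C :: "nat \<Rightarrow> nat \<Rightarrow> nat \<Rightarrow> 'a::{field,finite}"
  assumes "finite {r. C i j r \<noteq> 0}" "z div int CARD('a) ^ m = w"
  shows "(\<Sum>r\<in>{r. C i j r \<noteq> 0}. C i j r * psi r (qdigit CARD('a) z r))
    = leading_form C m i j (input_vector psi m z) + trailing_part C psi m w i j"
proof -
  have q: "0 < CARD('a)"
    by (simp add: finite_UNIV_card_ge_0)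
  have low: "(\<Sum>r\<in>{r. C i j r \<noteq> 0 \<and> r < m}. C i j r * psi r (qdigit CARD('a) z r))
      = leading_form C m i j (input_vector psi m z)"
    unfolding leading_form_def input_vector_def
    by (rule sum.mono_neutral_cong_left) (simp_all add: subset_iff Ball_def, blast)
  have "(w * int CARD('a) ^ m) div int CARD('a) ^ m = w"
    using q by simp
  then have "qdigit CARD('a) z r = qdigit CARD('a) (w * int CARD('a) ^ m) r" if "m \<le> r" for r
    using qdigit_eq_if_div_eq[OF q that] assms(2) by simp
  then have high: "(\<Sum>r\<in>{r. C i j r \<noteq> 0 \<and> m \<le> r}. C i j r * psi r (qdigit CARD('a) z r))
      = trailing_part C psi m w i j"
    unfolding trailing_part_def by (intro sum.cong) simp_all
  have split: "{r. C i j r \<noteq> 0} = {r. C i j r \<noteq> 0 \<and> r < m} \<union> {r. C i j r \<noteq> 0 \<and> m \<le> r}"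
    by auto
  show ?thesis
    unfolding low[symmetric] high[symmetric] split
    by (rule sum.union_disjoint) (use assms(1) in auto)
qed

lemma bij_betw_input_vector:
  fixes psi :: "nat \<Rightarrow> nat \<Rightarrow> 'a::finite"
  assumes psi: "\<forall>r. bij_betw (psi r) {..<CARD('a)} UNIV" and N: "qadic_block CARD('a) m S w N"
  shows "bij_betw (\<lambda>n. input_vector psi m (S n)) N (PiE {..<m} (\<lambda>_. UNIV))"
proof -
  have q: "0 < CARD('a)"
    by (simp add: finite_UNIV_card_ge_0)
  have inj: "inj_on (\<lambda>n. input_vector psi m (S n)) N"
  proof (rule inj_onI)
    fix n1 n2
    assume n: "n1 \<in> N" "n2 \<in> N" "input_vector psi m (S n1) = input_vector psi m (S n2)"
    have "qdigit CARD('a) (S n1) r = qdigit CARD('a) (S n2) r" if "r < m" for r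
    proof -
      have "psi r (qdigit CARD('a) (S n1) r) = psi r (qdigit CARD('a) (S n2) r)"
        using fun_cong[OF n(3), of r] that by (simp add: input_vector_def)
      moreover have "inj_on (psi r) {..<CARD('a)}"
        using psi bij_betw_imp_inj_on by blast
      ultimately show ?thesis
        using qdigit_less[OF q] by (simp add: inj_on_eq_iff)
    qed
    moreover have "S n1 div int CARD('a) ^ m = S n2 div int CARD('a) ^ m"
      using N n(1,2) unfolding qadic_block_def by simp
    ultimately have "S n1 = S n2"
      by (rule eq_if_qdigit_eq_and_div_eq[OF q])
    moreover have "inj_on S N"
      using N unfolding qadic_block_def by blast
    ultimately show "n1 = n2"
      using n(1,2) by (simp add: inj_on_eq_iff)
  qed
  have "(\<lambda>n. input_vector psi m (S n)) ` N \<subseteq> PiE {..<m} (\<lambda>_. UNIV)"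
    by (simp add: input_vector_def image_subset_iff)
  moreover have "card ((\<lambda>n. input_vector psi m (S n)) ` N) = card (PiE {..<m} (\<lambda>_. UNIV :: 'a set))"
    using N inj by (simp add: card_image card_PiE qadic_block_def)
  ultimately have "(\<lambda>n. input_vector psi m (S n)) ` N = PiE {..<m} (\<lambda>_. UNIV)"
    by (intro card_subset_eq) (simp_all add: finite_PiE)
  with inj show ?thesis
    by (simp add: bij_betw_def)
qed

lemma gen_digit_less:
  "bij_betw (lam i j) UNIV {..<CARD('a)} \<Longrightarrow>
    gen_digit psi (C :: nat \<Rightarrow> nat \<Rightarrow> nat \<Rightarrow> 'a::{field,finite}) lam z i j < CARD('a)"
  unfolding gen_digit_def using bij_betw_apply by fastforce

lemma trunc_point_bounds:
  fixes C :: "nat \<Rightarrow> nat \<Rightarrow> nat \<Rightarrow> 'a::{field,finite}"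
  assumes "\<forall>j\<ge>1. bij_betw (lam i j) UNIV {..<CARD('a)}"
  shows "0 \<le> trunc_point psi C lam S m n i \<and> trunc_point psi C lam S m n i < 1"
  unfolding trunc_point_def
  using assms gen_digit_less[where C = C] by (intro sum_digits_bounds) (simp_all add: finite_UNIV_card_ge_0)

lemma gen_digit_eq_iff_leading_form:
  fixes C :: "nat \<Rightarrow> nat \<Rightarrow> nat \<Rightarrow> 'a::{field,finite}"
  assumes lam: "bij_betw (lam i j) UNIV {..<CARD('a)}" and "f < CARD('a)"
    and "finite {r. C i j r \<noteq> 0}" "z div int CARD('a) ^ m = w"
  shows "gen_digit psi C lam z i j = f \<longleftrightarrow>
    leading_form C m i j (input_vector psi m z) = inv_into UNIV (lam i j) f - trailing_part C psi m w i j"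
proof -
  have "lam i j x = f \<longleftrightarrow> x = inv_into UNIV (lam i j) f" for x
    using lam \<open>f < CARD('a)\<close> by (auto simp: bij_betw_def inv_into_f_f f_inv_into_f)
  then show ?thesis
    unfolding gen_digit_def generator_sum_split[where C = C and i = i and j = j, OF assms(3,4)]
    by (simp add: eq_diff_eq)
qed

definition affine_solutions ::
  "(nat \<Rightarrow> nat \<Rightarrow> nat \<Rightarrow> 'a::field) \<Rightarrow> nat \<Rightarrow> nat \<Rightarrow> (nat \<Rightarrow> nat) \<Rightarrow> (nat \<Rightarrow> nat \<Rightarrow> 'a) \<Rightarrow>
    (nat \<Rightarrow> 'a) set"
  where "affine_solutions C m s d \<beta> =
    {y \<in> PiE {..<m} (\<lambda>_. UNIV). \<forall>i\<in>{1..s}. \<forall>j\<in>{1..d i}. leading_form C m i j y = \<beta> i j}"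

definition box_points ::
  "nat \<Rightarrow> nat \<Rightarrow> (nat \<Rightarrow> nat \<Rightarrow> real) \<Rightarrow> nat set \<Rightarrow> (nat \<Rightarrow> nat) \<Rightarrow> (nat \<Rightarrow> nat) \<Rightarrow> nat set"
  where "box_points q s P N d a =
    {n \<in> N. \<forall>i\<in>{1..s}. real (a i) / real q ^ d i \<le> P n i \<and> P n i < (real (a i) + 1) / real q ^ d i}"

lemma card_digit_pattern_eq_card_affine_solutions:
  fixes C :: "nat \<Rightarrow> nat \<Rightarrow> nat \<Rightarrow> 'a::{field,finite}"
  assumes psi: "\<forall>r. bij_betw (psi r) {..<CARD('a)} UNIV"
    and lam: "\<forall>i\<in>{1..s}. \<forall>j\<ge>1. bij_betw (lam i j) UNIV {..<CARD('a)}"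
    and fin: "\<forall>i\<in>{1..s}. \<forall>j\<ge>1. finite {r. C i j r \<noteq> 0}"
    and N: "qadic_block CARD('a) m S w N"
    and f: "\<forall>i\<in>{1..s}. \<forall>j\<in>{1..d i}. f i j < CARD('a)"
  shows "card {n \<in> N. \<forall>i\<in>{1..s}. \<forall>j\<in>{1..d i}. gen_digit psi C lam (S n) i j = f i j}
    = card (affine_solutions C m s d (\<lambda>i j. inv_into UNIV (lam i j) (f i j) - trailing_part C psi m w i j))"
proof -
  have "(\<forall>i\<in>{1..s}. \<forall>j\<in>{1..d i}. leading_form C m i j (input_vector psi m (S n))
        = inv_into UNIV (lam i j) (f i j) - trailing_part C psi m w i j)
      \<longleftrightarrow> (\<forall>i\<in>{1..s}. \<forall>j\<in>{1..d i}. gen_digit psi C lam (S n) i j = f i j)" if "n \<in> N" for n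
  proof -
    have "S n div int CARD('a) ^ m = w"
      using N that by (simp add: qadic_block_def)
    then show ?thesis
      using lam f fin by (intro ball_cong refl gen_digit_eq_iff_leading_form[symmetric]) auto
  qed
  then have "bij_betw (\<lambda>n. input_vector psi m (S n))
      {n \<in> N. \<forall>i\<in>{1..s}. \<forall>j\<in>{1..d i}. gen_digit psi C lam (S n) i j = f i j}
      (affine_solutions C m s d (\<lambda>i j. inv_into UNIV (lam i j) (f i j) - trailing_part C psi m w i j))"
    unfolding affine_solutions_def by (rule bij_betw_Collect[OF bij_betw_input_vector[OF psi N]])
  then show ?thesis
    by (rule bij_betw_same_card)
qed

lemma box_points_eq_digit_pattern:
  fixes C :: "nat \<Rightarrow> nat \<Rightarrow> nat \<Rightarrow> 'a::{field,finite}"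
  assumes lam: "\<forall>i\<in>{1..s}. \<forall>j\<ge>1. bij_betw (lam i j) UNIV {..<CARD('a)}"
    and d: "\<forall>i\<in>{1..s}. d i \<le> m"
    and f: "\<forall>i\<in>{1..s}. \<forall>j\<in>{1..d i}. f i j < CARD('a)"
    and a: "\<forall>i\<in>{1..s}. digits_num CARD('a) (d i) (f i) = a i"
  shows "box_points CARD('a) s (trunc_point psi C lam S m) N d a
    = {n \<in> N. \<forall>i\<in>{1..s}. \<forall>j\<in>{1..d i}. gen_digit psi C lam (S n) i j = f i j}"
proof -
  have q: "0 < CARD('a)"
    by (simp add: finite_UNIV_card_ge_0)
  have "real (a i) / real CARD('a) ^ d i \<le> trunc_point psi C lam S m n i \<and>
      trunc_point psi C lam S m n i < (real (a i) + 1) / real CARD('a) ^ d i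
      \<longleftrightarrow> (\<forall>j\<in>{1..d i}. gen_digit psi C lam (S n) i j = f i j)" if "i \<in> {1..s}" for n i
    unfolding trunc_point_def a[rule_format, OF that, symmetric]
    using that d f lam gen_digit_less[where C = C] by (intro sum_digits_in_interval_iff[OF q]) auto
  then show ?thesis
    unfolding box_points_def by auto
qed

lemma card_box_points_eq_card_affine_solutions:
  fixes C :: "nat \<Rightarrow> nat \<Rightarrow> nat \<Rightarrow> 'a::{field,finite}"
  assumes psi: "\<forall>r. bij_betw (psi r) {..<CARD('a)} UNIV"
    and lam: "\<forall>i\<in>{1..s}. \<forall>j\<ge>1. bij_betw (lam i j) UNIV {..<CARD('a)}"
    and fin: "\<forall>i\<in>{1..s}. \<forall>j\<ge>1. finite {r. C i j r \<noteq> 0}"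
    and N: "qadic_block CARD('a) m S w N"
    and d: "\<forall>i\<in>{1..s}. d i \<le> m" and a: "\<forall>i\<in>{1..s}. a i < CARD('a) ^ d i"
  shows "\<exists>\<beta>. card (box_points CARD('a) s (trunc_point psi C lam S m) N d a)
    = card (affine_solutions C m s d \<beta>)"
proof -
  have q: "0 < CARD('a)"
    by (simp add: finite_UNIV_card_ge_0)
  define f where "f i = (SOME e. (\<forall>j\<in>{1..d i}. e j < CARD('a)) \<and> digits_num CARD('a) (d i) e = a i)"
    for i
  have f_spec: "(\<forall>j\<in>{1..d i}. f i j < CARD('a)) \<and> digits_num CARD('a) (d i) (f i) = a i"
    if "i \<in> {1..s}" for i
  proof -
    have "a i < CARD('a) ^ d i"
      using a that by blast
    then show ?thesis
      unfolding f_def by (rule someI_ex[OF ex_digits_num_eq[OF q]])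
  qed
  then have f: "\<forall>i\<in>{1..s}. \<forall>j\<in>{1..d i}. f i j < CARD('a)"
    and digits: "\<forall>i\<in>{1..s}. digits_num CARD('a) (d i) (f i) = a i"
    by blast+
  show ?thesis
  proof
    show "card (box_points CARD('a) s (trunc_point psi C lam S m) N d a)
      = card (affine_solutions C m s d (\<lambda>i j. inv_into UNIV (lam i j) (f i j) - trailing_part C psi m w i j))"
      unfolding box_points_eq_digit_pattern[OF lam d f digits]
      by (rule card_digit_pattern_eq_card_affine_solutions[OF psi lam fin N f])
  qed
qed

lemma card_affine_solutions_eq_card_box_points:
  fixes C :: "nat \<Rightarrow> nat \<Rightarrow> nat \<Rightarrow> 'a::{field,finite}"
  assumes psi: "\<forall>r. bij_betw (psi r) {..<CARD('a)} UNIV"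
    and lam: "\<forall>i\<in>{1..s}. \<forall>j\<ge>1. bij_betw (lam i j) UNIV {..<CARD('a)}"
    and fin: "\<forall>i\<in>{1..s}. \<forall>j\<ge>1. finite {r. C i j r \<noteq> 0}"
    and N: "qadic_block CARD('a) m S w N"
    and d: "\<forall>i\<in>{1..s}. d i \<le> m"
  shows "\<exists>a. (\<forall>i\<in>{1..s}. a i < CARD('a) ^ d i) \<and>
    card (affine_solutions C m s d \<beta>) = card (box_points CARD('a) s (trunc_point psi C lam S m) N d a)"
proof -
  define f where "f i j = lam i j (\<beta> i j + trailing_part C psi m w i j)" for i j
  define a where "a i = digits_num CARD('a) (d i) (f i)" for i
  have inv_f: "inv_into UNIV (lam i j) (f i j) - trailing_part C psi m w i j = \<beta> i j"
    and f_less_ij: "f i j < CARD('a)" if "i \<in> {1..s}" "j \<in> {1..d i}" for i j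
  proof -
    have lam_ij: "bij_betw (lam i j) UNIV {..<CARD('a)}"
      using lam that by simp
    then show "inv_into UNIV (lam i j) (f i j) - trailing_part C psi m w i j = \<beta> i j"
      unfolding f_def by (simp add: bij_betw_imp_inj_on)
    show "f i j < CARD('a)"
      unfolding f_def using lam_ij bij_betw_apply by fastforce
  qed
  have f_less: "\<forall>i\<in>{1..s}. \<forall>j\<in>{1..d i}. f i j < CARD('a)"
    using f_less_ij by blast
  have digits: "\<forall>i\<in>{1..s}. digits_num CARD('a) (d i) (f i) = a i"
    by (simp add: a_def)
  have a_less: "\<forall>i\<in>{1..s}. a i < CARD('a) ^ d i"
    unfolding a_def using f_less by (simp add: digits_num_less)
  have "card (affine_solutions C m s d \<beta>)
      = card (affine_solutions C m s d (\<lambda>i j. inv_into UNIV (lam i j) (f i j) - trailing_part C psi m w i j))"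
    unfolding affine_solutions_def using inv_f by simp
  also have "\<dots> = card (box_points CARD('a) s (trunc_point psi C lam S m) N d a)"
    unfolding box_points_eq_digit_pattern[OF lam d f_less digits]
    by (rule card_digit_pattern_eq_card_affine_solutions[OF psi lam fin N f_less, symmetric])
  finally show ?thesis
    using a_less by blast
qed


lemma is_net_transfer:
  fixes C :: "nat \<Rightarrow> nat \<Rightarrow> nat \<Rightarrow> 'a::{field,finite}"
  assumes psi: "\<forall>r. bij_betw (psi r) {..<CARD('a)} UNIV"
    and lam: "\<forall>i\<in>{1..s}. \<forall>j\<ge>1. bij_betw (lam i j) UNIV {..<CARD('a)}"
    and psi': "\<forall>r. bij_betw (psi' r) {..<CARD('a)} UNIV"
    and lam': "\<forall>i\<in>{1..s}. \<forall>j\<ge>1. bij_betw (lam' i j) UNIV {..<CARD('a)}"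
    and fin: "\<forall>i\<in>{1..s}. \<forall>j\<ge>1. finite {r. C i j r \<noteq> 0}"
    and N: "qadic_block CARD('a) m S w N" and N': "qadic_block CARD('a) m S' w' N'"
    and net': "is_net CARD('a) t m s N' (trunc_point psi' C lam' S' m)"
  shows "is_net CARD('a) t m s N (trunc_point psi C lam S m)"
  unfolding is_net_def
proof (intro conjI allI impI)
  show "t \<le> m" "finite N" "card N = CARD('a) ^ m"
    using net' N by (simp_all add: is_net_def qadic_block_def)
  show "\<forall>n\<in>N. \<forall>i\<in>{1..s}. 0 \<le> trunc_point psi C lam S m n i \<and> trunc_point psi C lam S m n i < 1"
    using lam trunc_point_bounds[where C = C] by blast
next
  fix d a
  assume da: "(\<Sum>i = 1..s. d i) = m - t \<and> (\<forall>i\<in>{1..s}. a i < CARD('a) ^ d i)"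
  have d: "\<forall>i\<in>{1..s}. d i \<le> m"
  proof
    fix i
    assume "i \<in> {1..s}"
    then have "d i \<le> (\<Sum>i = 1..s. d i)"
      by (intro member_le_sum) auto
    then show "d i \<le> m"
      using da by simp
  qed
  obtain \<beta> where \<beta>: "card (box_points CARD('a) s (trunc_point psi C lam S m) N d a)
      = card (affine_solutions C m s d \<beta>)"
    using card_box_points_eq_card_affine_solutions[OF psi lam fin N d] da by blast
  obtain a' where a': "\<forall>i\<in>{1..s}. a' i < CARD('a) ^ d i"
    and \<beta>': "card (affine_solutions C m s d \<beta>)
      = card (box_points CARD('a) s (trunc_point psi' C lam' S' m) N' d a')"
    using card_affine_solutions_eq_card_box_points[OF psi' lam' fin N' d] by blast
  have "card (box_points CARD('a) s (trunc_point psi C lam S m) N d a)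
      = card (box_points CARD('a) s (trunc_point psi' C lam' S' m) N' d a')"
    using \<beta> \<beta>' by simp
  also have "\<dots> = CARD('a) ^ t"
    using net' da a' unfolding is_net_def box_points_def by blast
  finally show "card {n \<in> N. \<forall>i\<in>{1..s}. real (a i) / real CARD('a) ^ d i \<le> trunc_point psi C lam S m n i \<and>
      trunc_point psi C lam S m n i < (real (a i) + 1) / real CARD('a) ^ d i} = CARD('a) ^ t"
    unfolding box_points_def .
qed

lemma qadic_block_int:
  assumes "0 < q"
  shows "qadic_block q m int (int k) {k * q ^ m..<(k + 1) * q ^ m}"
proof -
  have "int n div int q ^ m = int k" if "n \<in> {k * q ^ m..<(k + 1) * q ^ m}" for n
  proof -
    have "n div q ^ m = k"
      using that assms by (auto intro: div_nat_eqI simp: mult.commute)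
    then show ?thesis
      by (metis of_nat_power zdiv_int)
  qed
  then show ?thesis
    by (simp add: qadic_block_def)
qed

lemma qadic_block_minus_int:
  assumes "0 < q"
  shows "qadic_block q m (\<lambda>n. - int n - 1) (- int k - 1) {k * q ^ m..<(k + 1) * q ^ m}"
proof -
  have "(- int n - 1) div int q ^ m = - int k - 1" if "n \<in> {k * q ^ m..<(k + 1) * q ^ m}" for n
  proof -
    define r where "r = n - k * q ^ m"
    have r: "n = k * q ^ m + r" "r < q ^ m"
      using that unfolding r_def by auto
    have "- int n - 1 = (int q ^ m - 1 - int r) + (- int k - 1) * int q ^ m"
      unfolding r by (simp add: algebra_simps)
    then have "(- int n - 1) div int q ^ m = ((int q ^ m - 1 - int r) + (- int k - 1) * int q ^ m) div int q ^ m"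
      by (rule arg_cong)
    also have "\<dots> = (int q ^ m - 1 - int r) div int q ^ m + (- int k - 1)"
      using assms by simp
    also have "(int q ^ m - 1 - int r) div int q ^ m = 0"
      using r(2) by (intro div_pos_pos_trivial) (auto simp flip: of_nat_power)
    finally show ?thesis
      by simp
  qed
  then show ?thesis
    by (simp add: qadic_block_def inj_on_def)
qed

theorem proposition1:
  fixes C :: "nat \<Rightarrow> nat \<Rightarrow> nat \<Rightarrow> 'a::{field,finite}"
    and s :: nat and T :: "nat \<Rightarrow> nat"
  assumes "s \<ge> 1"
    and "\<forall>m. T m \<le> m"
    and "\<forall>i\<in>{1..s}. \<forall>j\<ge>1. finite {r. C i j r \<noteq> 0}"
    and "\<exists>psi lam. (\<forall>r. bij_betw (psi r) {..<(card (UNIV :: 'a set))} UNIV) \<and>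
                  (\<exists>R. \<forall>r\<ge>R. psi r 0 = 0) \<and>
                  (\<forall>i\<in>{1..s}. \<forall>j\<ge>1. bij_betw (lam i j) UNIV {..<(card (UNIV :: 'a set))}) \<and>
                  is_Ts_seq (card (UNIV :: 'a set)) T s (trunc_point psi C lam (\<lambda>n. int n))"
  shows "\<forall>psi lam. (\<forall>r. bij_betw (psi r) {..<(card (UNIV :: 'a set))} UNIV) \<and>
                  (\<forall>i\<in>{1..s}. \<forall>j\<ge>1. bij_betw (lam i j) UNIV {..<(card (UNIV :: 'a set))}) \<longrightarrow>
                  is_Ts_seq (card (UNIV :: 'a set)) T s (trunc_point psi C lam (\<lambda>n. - int n - 1))"
proof (intro allI impI)
  fix psi :: "nat \<Rightarrow> nat \<Rightarrow> 'a" and lam :: "nat \<Rightarrow> nat \<Rightarrow> 'a \<Rightarrow> nat"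
  assume "(\<forall>r. bij_betw (psi r) {..<CARD('a)} UNIV) \<and>
    (\<forall>i\<in>{1..s}. \<forall>j\<ge>1. bij_betw (lam i j) UNIV {..<CARD('a)})"
  then have psi: "\<forall>r. bij_betw (psi r) {..<CARD('a)} UNIV"
    and lam: "\<forall>i\<in>{1..s}. \<forall>j\<ge>1. bij_betw (lam i j) UNIV {..<CARD('a)}"
    by blast+
  from assms(4) obtain psi0 lam0 where psi0: "\<forall>r. bij_betw (psi0 r) {..<CARD('a)} UNIV"
    and lam0: "\<forall>i\<in>{1..s}. \<forall>j\<ge>1. bij_betw (lam0 i j) UNIV {..<CARD('a)}"
    and seq0: "is_Ts_seq CARD('a) T s (trunc_point psi0 C lam0 int)"
    by blast
  have q: "0 < CARD('a)"
    by (simp add: finite_UNIV_card_ge_0)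
  show "is_Ts_seq CARD('a) T s (trunc_point psi C lam (\<lambda>n. - int n - 1))"
    unfolding is_Ts_seq_def
  proof (intro allI impI)
    fix k m
    assume "T m < m"
    then have "is_net CARD('a) (T m) m s {0 * CARD('a) ^ m..<(0 + 1) * CARD('a) ^ m}
        (trunc_point psi0 C lam0 int m)"
      using seq0 unfolding is_Ts_seq_def by blast
    then show "is_net CARD('a) (T m) m s {k * CARD('a) ^ m..<(k + 1) * CARD('a) ^ m}
        (trunc_point psi C lam (\<lambda>n. - int n - 1) m)"
      by (rule is_net_transfer[OF psi lam psi0 lam0 assms(3)
            qadic_block_minus_int[OF q] qadic_block_int[OF q]])
  qed
qed

end
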